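(* Let $\delta:\,]0,+\infty[\to\mathbb R$ be nonnegative, bounded and continuously differentiable, and let $r:\,]\alpha,\omega[\to\,]0,+\infty[$ be a solution of $\ddot r+\delta(r)\dot r=-1/r^2$ which is maximal both to the left and to the right. Let $h(t)=\frac12\dot r(t)^2-\frac1{r(t)}$ (a nonincreasing function). If $\alpha>-\infty$, then: (i) $\lim_{t\downarrow\alpha}r(t)=0$; (ii) $h(\alpha):=\lim_{t\downarrow\alpha}h(t)<+\infty$; (iii) $\lim_{t\downarrow\alpha}\dfrac{r(t)}{(t-\alpha)^{2/3}}=\sqrt[3]{9/2}$. *)

theory Defs
  imports "HOL-Analysis.Analysis" "HOL-Library.Extended_Real"
begin

definition ivl :: "real \<Rightarrow> ereal \<Rightarrow> real set" where
  "ivl a w = {t. a < t \<and> ereal t < w}"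

definition is_sol :: "(real \<Rightarrow> real) \<Rightarrow> real set \<Rightarrow> (real \<Rightarrow> real) \<Rightarrow> bool" where
  "is_sol \<delta> I r \<longleftrightarrow>
     (\<forall>t\<in>I. 0 < r t \<and> (r has_real_derivative deriv r t) (at t) \<and>
        (deriv r has_real_derivative (- \<delta> (r t) * deriv r t - 1 / (r t)\<^sup>2)) (at t))"

definition max_left :: "(real \<Rightarrow> real) \<Rightarrow> real \<Rightarrow> ereal \<Rightarrow> (real \<Rightarrow> real) \<Rightarrow> bool" where
  "max_left \<delta> a w r \<longleftrightarrow>
     \<not> (\<exists>b s. b < a \<and> is_sol \<delta> (ivl b w) s \<and> (\<forall>t\<in>ivl a w. s t = r t))"

definition max_right :: "(real \<Rightarrow> real) \<Rightarrow> real \<Rightarrow> ereal \<Rightarrow> (real \<Rightarrow> real) \<Rightarrow> bool" where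
  "max_right \<delta> a w r \<longleftrightarrow>
     \<not> (\<exists>w' s. w < w' \<and> is_sol \<delta> (ivl a w') s \<and> (\<forall>t\<in>ivl a w. s t = r t))"

end

theory Submission
  imports Defs
begin

text \<open>
  The energy \<open>h = r'\<^sup>2/2 - 1/r\<close> satisfies \<open>h' = -\<delta>(r) r'\<^sup>2 \<le> 0\<close>. At a critical point of \<open>r\<close>
  the energy equals \<open>-1/r\<close>, so \<open>r\<close> has no critical points where it is small.

  Suppose \<open>r\<close> does not tend to \<open>0\<close> at \<open>\<alpha>\<close>. If \<open>r\<close> stays away from \<open>0\<close> near \<open>\<alpha>\<close>, then
  \<open>h' \<ge> -D r'\<^sup>2 = -D (2h + 2/r)\<close> bounds \<open>h\<close> from above, hence \<open>r'\<close> and \<open>r''\<close> are bounded; so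
  \<open>(r, r')\<close> has a limit with positive first component, and the local (Picard) solution through
  it continues \<open>r\<close> to the left of \<open>\<alpha>\<close>, contradicting maximality. Otherwise \<open>r\<close> oscillates,
  and a small local minimum would be a critical point.

  Once \<open>r \<rightarrow> 0\<close>, \<open>r'\<close> has no zeros near \<open>\<alpha>\<close>, hence is positive, and \<open>r'\<^sup>2 \<ge> 1/r\<close>. The
  same estimate with \<open>2/r \<le> 4 (\<surd>r)'\<close> bounds \<open>h\<close> from above, so the monotone function \<open>h\<close>
  converges. Then \<open>r r'\<^sup>2 = 2 h r + 2 \<rightarrow> 2\<close>, i.e. \<open>(r\<^sup>3\<^sup>/\<^sup>2)' = 3/2 \<surd>r r' \<rightarrow> 3/\<surd>2\<close>, and
  l'Hospital's rule gives \<open>r\<^sup>3\<^sup>/\<^sup>2 / (t - \<alpha>) \<rightarrow> 3/\<surd>2\<close>, i.e.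
  \<open>r / (t - \<alpha>)\<^sup>2\<^sup>/\<^sup>3 \<rightarrow> (9/2)\<^sup>1\<^sup>/\<^sup>3\<close>.
\<close>

lemma DERIV_bounded_imp_lipschitz_on:
  fixes f f' :: "real \<Rightarrow> real"
  assumes "convex S" "0 \<le> B"
    and "\<And>x. x \<in> S \<Longrightarrow> (f has_real_derivative f' x) (at x within S)"
    and "\<And>x. x \<in> S \<Longrightarrow> \<bar>f' x\<bar> \<le> B"
  shows "B-lipschitz_on S f"
  using field_differentiable_bound[OF assms(1,3)] assms(2,4)
  by (intro lipschitz_onI) (auto simp: dist_real_def)

lemma lipschitz_on_mult:
  fixes f g :: "'a::metric_space \<Rightarrow> 'b::real_normed_algebra"
  assumes "L-lipschitz_on U f" "M-lipschitz_on U g" "0 \<le> A" "0 \<le> B"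
    and "\<And>x. x \<in> U \<Longrightarrow> norm (f x) \<le> A" "\<And>x. x \<in> U \<Longrightarrow> norm (g x) \<le> B"
  shows "(A * M + B * L)-lipschitz_on U (\<lambda>x. f x * g x)"
proof (rule lipschitz_onI)
  fix x y assume xy: "x \<in> U" "y \<in> U"
  have "dist (f x * g x) (f y * g y) = norm (f x * (g x - g y) + (f x - f y) * g y)"
    by (simp add: dist_norm algebra_simps)
  also have "\<dots> \<le> norm (f x) * norm (g x - g y) + norm (f x - f y) * norm (g y)"
    by (intro order_trans[OF norm_triangle_ineq] add_mono norm_mult_ineq)
  also have "\<dots> \<le> A * (M * dist x y) + (L * dist x y) * B"
    using lipschitz_onD[OF assms(1) xy] lipschitz_onD[OF assms(2) xy] assms(3-6) xy
    by (intro add_mono mult_mono) (auto simp: dist_norm intro: order_trans[OF norm_ge_zero])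
  finally show "dist (f x * g x) (f y * g y) \<le> (A * M + B * L) * dist x y"
    by (simp add: algebra_simps)
qed (use assms(3,4) lipschitz_on_nonneg[OF assms(1)] lipschitz_on_nonneg[OF assms(2)] in simp)

lemma lipschitz_on_cball_norm_bound:
  assumes lip: "L-lipschitz_on (cball x0 \<rho>) G" and x: "x \<in> cball x0 \<rho>"
  shows "norm (G x) \<le> norm (G x0) + L * \<rho>"
proof -
  have "x0 \<in> cball x0 \<rho>" using x by (simp add: order_trans[OF zero_le_dist])
  then have "dist (G x) (G x0) \<le> L * dist x x0" using lipschitz_onD[OF lip x] by simp
  also have "\<dots> \<le> L * \<rho>"
    using x lipschitz_on_nonneg[OF lip] by (intro mult_left_mono) (auto simp: dist_commute)
  finally show ?thesis using norm_triangle_ineq2[of "G x" "G x0"] by (simp add: dist_norm)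
qed

lemma lipschitz_on_fst: "1-lipschitz_on U fst"
  by (rule lipschitz_onI) (auto simp: dist_fst_le)

lemma lipschitz_on_snd: "1-lipschitz_on U snd"
  by (rule lipschitz_onI) (auto simp: dist_snd_le)

lemma C1_differentiable_on_lipschitz_on_Icc:
  fixes f :: "real \<Rightarrow> real"
  assumes "f C1_differentiable_on S" "{a..b} \<subseteq> S"
  obtains L where "L-lipschitz_on {a..b} f"
proof -
  obtain f' where f': "\<And>x. x \<in> S \<Longrightarrow> (f has_real_derivative f' x) (at x)" "continuous_on S f'"
    using assms(1) by (auto simp: C1_differentiable_on_def has_real_derivative_iff_has_vector_derivative)
  obtain B where "0 \<le> B" "\<And>x. x \<in> {a..b} \<Longrightarrow> norm (f' x) \<le> B"
    using continuous_on_compact_bound[OF compact_Icc continuous_on_subset[OF f'(2) assms(2)]] by metis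
  then have "B-lipschitz_on {a..b} f"
    using has_field_derivative_at_within[OF f'(1)] assms(2)
    by (intro DERIV_bounded_imp_lipschitz_on) auto
  with that show ?thesis .
qed

lemma lipschitz_on_inverse_square:
  assumes "0 < a"
  shows "(2 / a ^ 3)-lipschitz_on {a..b} (\<lambda>x::real. 1 / x\<^sup>2)"
proof (rule DERIV_bounded_imp_lipschitz_on)
  fix x assume x: "x \<in> {a..b}"
  then have "0 < x" using assms by simp
  show "((\<lambda>x. 1 / x\<^sup>2) has_real_derivative - 2 / x ^ 3) (at x within {a..b})"
    using \<open>0 < x\<close> by (auto intro!: derivative_eq_intros simp: power2_eq_square power3_eq_cube)
  have "a ^ 3 \<le> x ^ 3" using x assms by (intro power_mono) auto
  then show "\<bar>- 2 / x ^ 3\<bar> \<le> 2 / a ^ 3"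
    using assms \<open>0 < x\<close> by (simp add: frac_le)
qed (use assms in auto)

lemma eventually_at_right_imp_Ioc:
  fixes a :: real
  assumes "\<forall>\<^sub>F t in at_right a. P t"
  obtains b where "a < b" "\<And>t. a < t \<Longrightarrow> t \<le> b \<Longrightarrow> P t"
proof -
  obtain c where "a < c" "\<And>t. a < t \<Longrightarrow> t < c \<Longrightarrow> P t"
    using assms unfolding eventually_at_right_field by blast
  then show ?thesis by (intro that[of "(a + c) / 2"]) auto
qed

lemma at_within_Ioo_at_right: "a < b \<Longrightarrow> at a within {a<..<b} = at_right a"
  for a b :: real
  by (rule at_within_nhd[of _ "{..<b}"]) auto

lemma has_real_derivative_fst:
  "(y has_vector_derivative y') F \<Longrightarrow> ((\<lambda>t. fst (y t)) has_real_derivative fst y') F"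
  unfolding has_vector_derivative_def has_field_derivative_def
  by (drule has_derivative_fst, erule has_derivative_eq_rhs) (simp add: fun_eq_iff)

lemma has_real_derivative_snd:
  "(y has_vector_derivative y') F \<Longrightarrow> ((\<lambda>t. snd (y t)) has_real_derivative snd y') F"
  unfolding has_vector_derivative_def has_field_derivative_def
  by (drule has_derivative_snd, erule has_derivative_eq_rhs) (simp add: fun_eq_iff)

lemma has_vector_derivative_reflect:
  "(y has_vector_derivative y') (at (a - t)) \<Longrightarrow> ((\<lambda>t. y (a - t)) has_vector_derivative - y') (at t)"
proof -
  assume y: "(y has_vector_derivative y') (at (a - t))"
  have "((\<lambda>t. a - t) has_real_derivative -1) (at t)"
    by (auto intro!: derivative_eq_intros)
  then have "((\<lambda>t. a - t) has_vector_derivative -1) (at t)"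
    by (simp add: has_real_derivative_iff_has_vector_derivative)
  from vector_diff_chain_at[OF this y] show ?thesis by (simp add: o_def)
qed

lemma deriv_eq_on_open:
  "open I \<Longrightarrow> (\<And>t. t \<in> I \<Longrightarrow> f t = g t) \<Longrightarrow> t \<in> I \<Longrightarrow> deriv f t = deriv g t"
  by (rule deriv_cong_ev) (auto simp: eventually_nhds)

lemma DERIV_from_deriv_limit:
  fixes f f' :: "real \<Rightarrow> real"
  assumes "(f \<longlongrightarrow> f a) (at a)"
    and "\<forall>\<^sub>F x in at a. (f has_real_derivative f' x) (at x)"
    and "(f' \<longlongrightarrow> l) (at a)"
  shows "(f has_real_derivative l) (at a)"
  unfolding has_field_derivative_iff
proof (rule lhopital[where f' = f' and g' = "\<lambda>_. 1"])
  show "((\<lambda>x. f x - f a) \<longlongrightarrow> 0) (at a)"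
    using assms(1) by (simp add: LIM_zero)
  show "((\<lambda>x. x - a) \<longlongrightarrow> 0) (at a)"
    by (simp add: LIM_zero tendsto_ident_at)
  show "\<forall>\<^sub>F x in at a. x - a \<noteq> 0"
    by (simp add: eventually_at_filter)
  show "\<forall>\<^sub>F x in at a. ((\<lambda>x. f x - f a) has_real_derivative f' x) (at x)"
    using assms(2) by eventually_elim (auto intro!: derivative_eq_intros)
  show "\<forall>\<^sub>F x in at a. ((\<lambda>x. x - a) has_real_derivative 1) (at x)"
    by (intro always_eventually allI) (auto intro!: derivative_eq_intros)
qed (use assms(3) in simp_all)

lemma tendsto_at_right_if_deriv_bounded:
  fixes f f' :: "real \<Rightarrow> real"
  assumes "a < b"
    and "\<And>x. x \<in> {a<..<b} \<Longrightarrow> (f has_real_derivative f' x) (at x)"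
    and "\<And>x. x \<in> {a<..<b} \<Longrightarrow> \<bar>f' x\<bar> \<le> B"
  obtains l where "(f \<longlongrightarrow> l) (at_right a)"
proof -
  have "0 \<le> B" using assms(3)[of "(a + b) / 2"] assms(1) by auto
  then have "B-lipschitz_on {a<..<b} f"
    using assms(2,3) by (intro DERIV_bounded_imp_lipschitz_on) (auto intro: has_field_derivative_at_within)
  then have "uniformly_continuous_on {a<..<b} f"
    by (rule lipschitz_on_uniformly_continuous)
  moreover have "a \<in> closure {a<..<b}" using assms(1) by simp
  ultimately obtain l where "(f \<longlongrightarrow> l) (at a within {a<..<b})"
    by (rule uniformly_continuous_on_extension_at_closure)
  with that show ?thesis by (simp add: at_within_Ioo_at_right[OF assms(1)])
qed

lemma antimono_tendsto_at_right:
  fixes f :: "real \<Rightarrow> real"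
  assumes "a < b"
    and "\<And>x y. a < x \<Longrightarrow> x \<le> y \<Longrightarrow> y < b \<Longrightarrow> f y \<le> f x"
    and "\<And>x. a < x \<Longrightarrow> x < b \<Longrightarrow> f x \<le> B"
  obtains l where "(f \<longlongrightarrow> l) (at_right a)"
proof -
  have "((\<lambda>x. - f x) \<longlongrightarrow> Inf ((\<lambda>x. - f x) ` ({a<..} \<inter> {a<..<b})))
      (at a within ({a<..} \<inter> {a<..<b}))"
    by (rule Lim_right_bound[where K = "- B"]) (use assms(2,3) in force)+
  moreover have "{a<..} \<inter> {a<..<b} = {a<..<b}" by auto
  ultimately have "((\<lambda>x. - (- f x)) \<longlongrightarrow> - Inf ((\<lambda>x. - f x) ` {a<..<b})) (at_right a)"
    by (intro tendsto_minus) (simp add: at_within_Ioo_at_right[OF assms(1)])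
  with that show ?thesis by simp
qed

text \<open>A negative value \<open>f' t\<close> would persist to the left of \<open>t\<close> by the intermediate value
  theorem, so \<open>f\<close> would stay above \<open>f t > 0\<close> there.\<close>

lemma deriv_pos_if_tendsto_0_at_right:
  fixes f f' :: "real \<Rightarrow> real"
  assumes f: "\<And>t. t \<in> {a<..b} \<Longrightarrow> (f has_real_derivative f' t) (at t)" "\<And>t. t \<in> {a<..b} \<Longrightarrow> 0 < f t"
    and f': "continuous_on {a<..b} f'" "\<And>t. t \<in> {a<..b} \<Longrightarrow> f' t \<noteq> 0"
    and lim: "(f \<longlongrightarrow> 0) (at_right a)" and t: "t \<in> {a<..b}"
  shows "0 < f' t"
proof (rule ccontr)
  assume "\<not> 0 < f' t"
  with f'(2)[OF t] have "f' t < 0" by simp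
  have neg: "f' s < 0" if s: "a < s" "s \<le> t" for s
  proof (rule ccontr)
    assume "\<not> f' s < 0"
    moreover have "continuous_on {s..t} f'"
      by (rule continuous_on_subset[OF f'(1)]) (use s t in auto)
    ultimately obtain x where "s \<le> x" "x \<le> t" "f' x = 0"
      using IVT2'[of f' t 0 s] \<open>f' t < 0\<close> s by force
    with f'(2)[of x] s t show False by simp
  qed
  have f_ge: "f t \<le> f s" if s: "a < s" "s \<le> t" for s
    using s t neg by (intro DERIV_nonpos_imp_nonincreasing[OF s(2)]) (force intro: less_imp_le f(1))
  have "\<forall>\<^sub>F s in at_right a. f s < f t"
    using order_tendstoD(2)[OF lim f(2)[OF t]] .
  then obtain c where "a < c" and below: "\<And>s. a < s \<Longrightarrow> s \<le> c \<Longrightarrow> f s < f t"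
    by (rule eventually_at_right_imp_Ioc) (rule that)
  have "a < min c t" "min c t \<le> c" "min c t \<le> t" using \<open>a < c\<close> t by auto
  then have "f (min c t) < f t" "f t \<le> f (min c t)" using below f_ge by auto
  then show False by simp
qed

section \<open>Local existence for Lipschitz differential equations\<close>

text \<open>Time is clamped to \<open>[0, \<eta>]\<close>, so that the Picard operator maps bounded continuous
  functions on the whole real line to such functions.\<close>

definition picard_op :: "('a::banach \<Rightarrow> 'a) \<Rightarrow> 'a \<Rightarrow> real \<Rightarrow> (real \<Rightarrow> 'a) \<Rightarrow> real \<Rightarrow> 'a" where
  "picard_op G x0 \<eta> y \<tau> = x0 + integral {0..max 0 (min \<eta> \<tau>)} (\<lambda>s. G (y s))"

lemma continuous_on_compose_cball:
  assumes "continuous_on (cball x0 \<rho>) G" "continuous_on UNIV y" "range y \<subseteq> cball x0 \<rho>"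
  shows "continuous_on T (\<lambda>s. G (y s))"
  by (rule continuous_on_compose2[OF assms(1) continuous_on_subset[OF assms(2)]]) (use assms(3) in auto)

lemma picard_op_continuous:
  assumes "continuous_on (cball x0 \<rho>) G" "continuous_on UNIV y" "range y \<subseteq> cball x0 \<rho>" "0 \<le> \<eta>"
  shows "continuous_on UNIV (picard_op G x0 \<eta> y)"
proof -
  have "continuous_on {0..\<eta>} (\<lambda>u. integral {0..u} (\<lambda>s. G (y s)))"
    by (intro indefinite_integral_continuous_1 integrable_continuous_real
        continuous_on_compose_cball[OF assms(1-3)])
  then have "continuous_on UNIV (\<lambda>\<tau>. integral {0..max 0 (min \<eta> \<tau>)} (\<lambda>s. G (y s)))"
    by (rule continuous_on_compose2[where f = "\<lambda>\<tau>. max 0 (min \<eta> \<tau>)"])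
       (use \<open>0 \<le> \<eta>\<close> in \<open>auto intro!: continuous_intros\<close>)
  then show ?thesis unfolding picard_op_def by (intro continuous_intros)
qed

lemma picard_op_near:
  assumes "continuous_on (cball x0 \<rho>) G" "continuous_on UNIV y" "range y \<subseteq> cball x0 \<rho>" "0 \<le> \<eta>"
    and "\<And>x. x \<in> cball x0 \<rho> \<Longrightarrow> norm (G x) \<le> M"
  shows "dist x0 (picard_op G x0 \<eta> y \<tau>) \<le> M * \<eta>"
proof -
  have Gy: "norm (G (y s)) \<le> M" for s using assms(3,5) by blast
  then have "0 \<le> M" using norm_ge_zero order_trans by blast
  have "norm (integral {0..max 0 (min \<eta> \<tau>)} (\<lambda>s. G (y s))) \<le> M * (max 0 (min \<eta> \<tau>) - 0)"
    using assms(4) Gy continuous_on_compose_cball[OF assms(1-3)] by (intro integral_bound) auto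
  also have "\<dots> \<le> M * \<eta>" using \<open>0 \<le> M\<close> \<open>0 \<le> \<eta>\<close> by (intro mult_left_mono) auto
  finally show ?thesis by (simp add: picard_op_def dist_norm)
qed

lemma picard_op_contraction:
  assumes lip: "L-lipschitz_on (cball x0 \<rho>) G" and "0 \<le> \<eta>"
    and y: "continuous_on UNIV y" "range y \<subseteq> cball x0 \<rho>"
    and z: "continuous_on UNIV z" "range z \<subseteq> cball x0 \<rho>"
    and d: "\<And>s. dist (y s) (z s) \<le> d"
  shows "dist (picard_op G x0 \<eta> y \<tau>) (picard_op G x0 \<eta> z \<tau>) \<le> \<eta> * L * d"
proof -
  define c where "c = max 0 (min \<eta> \<tau>)"
  have c: "0 \<le> c" "c \<le> \<eta>" using \<open>0 \<le> \<eta>\<close> by (auto simp: c_def)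
  have G: "continuous_on (cball x0 \<rho>) G" by (rule lipschitz_on_continuous_on[OF lip])
  have "dist (picard_op G x0 \<eta> y \<tau>) (picard_op G x0 \<eta> z \<tau>)
      = norm (integral {0..c} (\<lambda>s. G (y s) - G (z s)))"
    using continuous_on_compose_cball[OF G y] continuous_on_compose_cball[OF G z]
    by (simp add: picard_op_def c_def dist_norm integral_diff integrable_continuous_real)
  also have "\<dots> \<le> (L * d) * (c - 0)"
  proof (rule integral_bound)
    show "continuous_on {0..c} (\<lambda>s. G (y s) - G (z s))"
      by (intro continuous_intros continuous_on_compose_cball[OF G y] continuous_on_compose_cball[OF G z])
    fix s
    have "dist (G (y s)) (G (z s)) \<le> L * dist (y s) (z s)"
      using lipschitz_onD[OF lip] y(2) z(2) by blast
    also have "\<dots> \<le> L * d" using d lipschitz_on_nonneg[OF lip] by (rule mult_left_mono)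
    finally show "norm (G (y s) - G (z s)) \<le> L * d" by (simp add: dist_norm)
  qed (use c in auto)
  also have "\<dots> \<le> (L * d) * \<eta>"
    using c lipschitz_on_nonneg[OF lip] order_trans[OF zero_le_dist d]
    by (intro mult_left_mono) auto
  finally show ?thesis by (simp add: mult_ac)
qed

lemma picard_op_fixed_point:
  fixes G :: "'a::banach \<Rightarrow> 'a"
  assumes lip: "L-lipschitz_on (cball x0 \<rho>) G" and M: "\<And>x. x \<in> cball x0 \<rho> \<Longrightarrow> norm (G x) \<le> M"
    and "0 \<le> \<rho>" "0 \<le> \<eta>" "\<eta> * L < 1" "M * \<eta> \<le> \<rho>"
  obtains y where "continuous_on UNIV y" "range y \<subseteq> cball x0 \<rho>" "picard_op G x0 \<eta> y = y"
proof -
  have G: "continuous_on (cball x0 \<rho>) G" by (rule lipschitz_on_continuous_on[OF lip])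
  define S :: "(real \<Rightarrow>\<^sub>C 'a) set" where "S = PiC UNIV (\<lambda>_. cball x0 \<rho>)"
  have S: "f \<in> S \<longleftrightarrow> range (apply_bcontfun f) \<subseteq> cball x0 \<rho>" for f
    by (auto simp: S_def mem_PiC_iff)
  define P where "P f = Bcontfun (picard_op G x0 \<eta> (apply_bcontfun f))" for f
  have P: "apply_bcontfun (P f) = picard_op G x0 \<eta> (apply_bcontfun f)" if "f \<in> S" for f
  proof -
    have "picard_op G x0 \<eta> (apply_bcontfun f) \<in> bcontfun"
    proof (rule bcontfun_normI)
      show "continuous_on UNIV (picard_op G x0 \<eta> (apply_bcontfun f))"
        using that \<open>0 \<le> \<eta>\<close> by (intro picard_op_continuous[OF G]) (auto simp: S)
      show "norm (picard_op G x0 \<eta> (apply_bcontfun f) \<tau>) \<le> norm x0 + M * \<eta>" for \<tau>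
        using picard_op_near[OF G _ _ _ M, of "apply_bcontfun f" \<eta> \<tau>] that \<open>0 \<le> \<eta>\<close>
          norm_triangle_ineq3[of "picard_op G x0 \<eta> (apply_bcontfun f) \<tau>" x0]
        by (auto simp: S dist_norm norm_minus_commute)
    qed
    then show ?thesis by (simp add: P_def Bcontfun_inverse)
  qed
  have P_S: "P ` S \<subseteq> S"
  proof
    fix h assume "h \<in> P ` S"
    then obtain f where f: "f \<in> S" "h = P f" by blast
    have "dist x0 (picard_op G x0 \<eta> (apply_bcontfun f) \<tau>) \<le> \<rho>" for \<tau>
      using order_trans[OF picard_op_near[OF G _ _ _ M] \<open>M * \<eta> \<le> \<rho>\<close>] f(1) \<open>0 \<le> \<eta>\<close>
      by (simp add: S)
    then show "h \<in> S" using f by (auto simp: S P)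
  qed
  have contraction: "dist (P f) (P g) \<le> (\<eta> * L) * dist f g" if "f \<in> S" "g \<in> S" for f g
    using that \<open>0 \<le> \<eta>\<close>
    by (intro dist_bound) (auto simp: P S intro!: picard_op_contraction[OF lip] dist_bounded)
  have "complete S" unfolding S_def complete_eq_closed by (intro closed_PiC) auto
  moreover have "const_bcontfun x0 \<in> S" using \<open>0 \<le> \<rho>\<close> by (auto simp: S)
  moreover have "0 \<le> \<eta> * L" using lipschitz_on_nonneg[OF lip] \<open>0 \<le> \<eta>\<close> by simp
  ultimately obtain f where f: "f \<in> S" "P f = f"
    using Banach_fix[OF _ _ _ \<open>\<eta> * L < 1\<close> P_S contraction] by blast
  then show ?thesis using P[OF f(1)] by (intro that[of "apply_bcontfun f"]) (auto simp: S)
qed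

lemma picard_local_existence:
  fixes G :: "'a::banach \<Rightarrow> 'a"
  assumes lip: "L-lipschitz_on (cball x0 \<rho>) G" and "0 < \<rho>"
  obtains \<eta> y where "0 < \<eta>" "y 0 = x0"
    "\<And>\<tau>. \<tau> \<in> {0..\<eta>} \<Longrightarrow> (y has_vector_derivative G (y \<tau>)) (at \<tau> within {0..\<eta>})"
    "\<And>\<tau>. y \<tau> \<in> cball x0 \<rho>"
proof -
  have L: "0 \<le> L" by (rule lipschitz_on_nonneg[OF lip])
  define M where "M = norm (G x0) + L * \<rho>"
  have M: "norm (G x) \<le> M" if "x \<in> cball x0 \<rho>" for x
    unfolding M_def by (rule lipschitz_on_cball_norm_bound[OF lip that])
  have "0 \<le> M" using L \<open>0 < \<rho>\<close> by (simp add: M_def)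
  define \<eta> where "\<eta> = min (1 / (L + 1)) (\<rho> / (M + 1))"
  have "0 < \<eta>" using L \<open>0 \<le> M\<close> \<open>0 < \<rho>\<close> by (simp add: \<eta>_def)
  have "\<eta> * L \<le> 1 / (L + 1) * L" using L by (intro mult_right_mono) (auto simp: \<eta>_def)
  also have "\<dots> < 1" using L by (simp add: field_simps)
  finally have "\<eta> * L < 1" .
  have "M * \<eta> \<le> M * (\<rho> / (M + 1))" using \<open>0 \<le> M\<close> by (intro mult_left_mono) (auto simp: \<eta>_def)
  also have "\<dots> \<le> \<rho>" using \<open>0 \<le> M\<close> \<open>0 < \<rho>\<close> by (simp add: field_simps)
  finally have "M * \<eta> \<le> \<rho>" .
  obtain y where y: "continuous_on UNIV y" "range y \<subseteq> cball x0 \<rho>" "picard_op G x0 \<eta> y = y"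
    by (rule picard_op_fixed_point[OF lip M])
       (use \<open>0 < \<rho>\<close> \<open>0 < \<eta>\<close> \<open>\<eta> * L < 1\<close> \<open>M * \<eta> \<le> \<rho>\<close> in auto)
  have y_eq: "y \<tau> = x0 + integral {0..\<tau>} (\<lambda>s. G (y s))" if "\<tau> \<in> {0..\<eta>}" for \<tau>
    using fun_cong[OF y(3), of \<tau>] that by (simp add: picard_op_def)
  have Gy: "continuous_on {0..\<eta>} (\<lambda>s. G (y s))"
    by (rule continuous_on_compose_cball[OF lipschitz_on_continuous_on[OF lip] y(1,2)])
  show ?thesis
  proof
    show "y 0 = x0" using y_eq[of 0] \<open>0 < \<eta>\<close> by simp
    show "y \<tau> \<in> cball x0 \<rho>" for \<tau> using y(2) by blast
    fix \<tau> assume \<tau>: "\<tau> \<in> {0..\<eta>}"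
    have "((\<lambda>u. x0 + integral {0..u} (\<lambda>s. G (y s))) has_vector_derivative G (y \<tau>))
        (at \<tau> within {0..\<eta>})"
      using integral_has_vector_derivative[OF Gy \<tau>] by (auto intro: derivative_eq_intros)
    then show "(y has_vector_derivative G (y \<tau>)) (at \<tau> within {0..\<eta>})"
      by (rule has_vector_derivative_transform_within[where d = 1]) (use \<tau> y_eq in auto)
  qed (rule \<open>0 < \<eta>\<close>)
qed

section \<open>Solutions of the damped Kepler equation\<close>

lemma open_ivl: "open (ivl a w)"
proof (cases w)
  case (real b)
  then have "ivl a w = {a<..<b}" by (auto simp: ivl_def)
  then show ?thesis by simp
next
  case PInf
  then have "ivl a w = {a<..}" by (auto simp: ivl_def)
  then show ?thesis by simp
next
  case MInf
  then have "ivl a w = {}" by (auto simp: ivl_def)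
  then show ?thesis by simp
qed

lemma ivl_downward_closed: "a < t \<Longrightarrow> t \<le> s \<Longrightarrow> s \<in> ivl a w \<Longrightarrow> t \<in> ivl a w"
  using le_less_trans[of "ereal t" "ereal s" w] by (auto simp: ivl_def)

lemma eventually_at_right_in_ivl:
  assumes "ereal a < w"
  shows "\<forall>\<^sub>F t in at_right a. t \<in> ivl a w"
proof -
  obtain b where "a < b" "ereal b < w" using ereal_dense2[OF assms] by auto
  then show ?thesis
    unfolding eventually_at_right_field
    by (auto simp: ivl_def intro!: exI[of _ b] less_trans[of _ "ereal b" w])
qed

lemma is_sol_cong:
  assumes sol: "is_sol \<delta> I s" and I: "open I" and eq: "\<And>t. t \<in> I \<Longrightarrow> s t = s' t"
  shows "is_sol \<delta> I s'"
  unfolding is_sol_def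
proof (intro ballI conjI)
  fix t assume t: "t \<in> I"
  have deriv_eq: "\<And>t. t \<in> I \<Longrightarrow> deriv s t = deriv s' t"
    using deriv_eq_on_open[OF I eq] .
  have st: "0 < s t" "(s has_real_derivative deriv s t) (at t)"
    "(deriv s has_real_derivative - \<delta> (s t) * deriv s t - 1 / (s t)\<^sup>2) (at t)"
    using bspec[OF sol[unfolded is_sol_def] t] by auto
  show "0 < s' t" using st(1) eq[OF t] by simp
  show "(s' has_real_derivative deriv s' t) (at t)"
    using has_field_derivative_transform_within_open[OF st(2) I t eq] deriv_eq[OF t] by simp
  show "(deriv s' has_real_derivative - \<delta> (s' t) * deriv s' t - 1 / (s' t)\<^sup>2) (at t)"
    using has_field_derivative_transform_within_open[OF st(3) I t deriv_eq] deriv_eq[OF t] eq[OF t]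
    by simp
qed

definition kepler_field :: "(real \<Rightarrow> real) \<Rightarrow> real \<times> real \<Rightarrow> real \<times> real" where
  "kepler_field \<delta> p = (snd p, - \<delta> (fst p) * snd p - 1 / (fst p)\<^sup>2)"

lemma is_sol_if_phase_curve:
  assumes I: "open I"
    and y: "\<And>t. t \<in> I \<Longrightarrow> (y has_vector_derivative kepler_field \<delta> (y t)) (at t)"
    and pos: "\<And>t. t \<in> I \<Longrightarrow> 0 < fst (y t)"
  shows "is_sol \<delta> I (\<lambda>t. fst (y t))"
    and "\<And>t. t \<in> I \<Longrightarrow> deriv (\<lambda>t. fst (y t)) t = snd (y t)"
proof -
  have fst_y: "((\<lambda>t. fst (y t)) has_real_derivative snd (y t)) (at t)" if "t \<in> I" for t
    using has_real_derivative_fst[OF y[OF that]] by (simp add: kepler_field_def)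
  show deriv_eq: "deriv (\<lambda>t. fst (y t)) t = snd (y t)" if "t \<in> I" for t
    using fst_y[OF that] by (rule DERIV_imp_deriv)
  show "is_sol \<delta> I (\<lambda>t. fst (y t))"
    unfolding is_sol_def
  proof (intro ballI conjI)
    fix t assume t: "t \<in> I"
    show "0 < fst (y t)" by (rule pos[OF t])
    show "((\<lambda>t. fst (y t)) has_real_derivative deriv (\<lambda>t. fst (y t)) t) (at t)"
      using fst_y[OF t] deriv_eq[OF t] by simp
    have "((\<lambda>t. snd (y t)) has_real_derivative - \<delta> (fst (y t)) * snd (y t) - 1 / (fst (y t))\<^sup>2) (at t)"
      using has_real_derivative_snd[OF y[OF t]] by (simp add: kepler_field_def)
    then have "(deriv (\<lambda>t. fst (y t)) has_real_derivative
        - \<delta> (fst (y t)) * snd (y t) - 1 / (fst (y t))\<^sup>2) (at t)"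
      by (rule has_field_derivative_transform_within_open[OF _ I t]) (simp add: deriv_eq)
    then show "(deriv (\<lambda>t. fst (y t)) has_real_derivative
        - \<delta> (fst (y t)) * deriv (\<lambda>t. fst (y t)) t - 1 / (fst (y t))\<^sup>2) (at t)"
      using deriv_eq[OF t] by simp
  qed
qed

lemma is_sol_glue:
  assumes left: "is_sol \<delta> {b<..<a} s" and right: "is_sol \<delta> (ivl a w) s"
    and "b < a" "ereal a < w" and "0 < s a" and \<delta>: "isCont \<delta> (s a)"
    and s_lim: "(s \<longlongrightarrow> s a) (at a)" and v_lim: "(deriv s \<longlongrightarrow> v) (at a)"
  shows "is_sol \<delta> (ivl b w) s"
proof -
  have "\<forall>\<^sub>F t in at a. t \<in> {b<..<a} \<union> ivl a w"
    unfolding eventually_at_split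
    using eventually_at_right_in_ivl[OF \<open>ereal a < w\<close>] \<open>b < a\<close>
    by (auto simp: eventually_at_left_field elim: eventually_mono)
  then have near: "\<forall>\<^sub>F t in at a. (s has_real_derivative deriv s t) (at t) \<and>
      (deriv s has_real_derivative - \<delta> (s t) * deriv s t - 1 / (s t)\<^sup>2) (at t)"
    by (rule eventually_mono) (use left right in \<open>auto simp: is_sol_def\<close>)
  have "\<forall>\<^sub>F t in at a. (s has_real_derivative deriv s t) (at t)"
    using near by (rule eventually_mono) simp
  then have s_deriv: "(s has_real_derivative v) (at a)"
    by (rule DERIV_from_deriv_limit[OF s_lim _ v_lim])
  then have v: "deriv s a = v" by (rule DERIV_imp_deriv)
  have "((\<lambda>t. - \<delta> (s t) * deriv s t - 1 / (s t)\<^sup>2) \<longlongrightarrow> - \<delta> (s a) * v - 1 / (s a)\<^sup>2) (at a)"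
    using \<open>0 < s a\<close> by (intro tendsto_intros isCont_tendsto_compose[OF \<delta> s_lim] s_lim v_lim) auto
  moreover have "\<forall>\<^sub>F t in at a.
      (deriv s has_real_derivative - \<delta> (s t) * deriv s t - 1 / (s t)\<^sup>2) (at t)"
    using near by (rule eventually_mono) simp
  ultimately have v_deriv: "(deriv s has_real_derivative - \<delta> (s a) * v - 1 / (s a)\<^sup>2) (at a)"
    using DERIV_from_deriv_limit[of "deriv s" a] v_lim v by simp
  show ?thesis
    unfolding is_sol_def
  proof
    fix t assume "t \<in> ivl b w"
    then have "t \<in> {b<..<a} \<or> t = a \<or> t \<in> ivl a w" by (auto simp: ivl_def)
    then show "0 < s t \<and> (s has_real_derivative deriv s t) (at t) \<and>
        (deriv s has_real_derivative - \<delta> (s t) * deriv s t - 1 / (s t)\<^sup>2) (at t)"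
      using left right s_deriv v_deriv v \<open>0 < s a\<close> unfolding is_sol_def by blast
  qed
qed

lemma kepler_field_lipschitz_on:
  assumes C1: "\<delta> C1_differentiable_on {0<..}" and "0 < a" "0 \<le> c"
  obtains L where "L-lipschitz_on ({a..b} \<times> {-c..c}) (kepler_field \<delta>)"
proof -
  define B where "B = {a..b} \<times> {-c..c}"
  have "{a..b} \<subseteq> {0<..}" using \<open>0 < a\<close> by auto
  obtain L\<delta> where L\<delta>: "L\<delta>-lipschitz_on {a..b} \<delta>"
    using C1_differentiable_on_lipschitz_on_Icc[OF C1 \<open>{a..b} \<subseteq> {0<..}\<close>] .
  obtain D where D: "0 \<le> D" "\<And>x. x \<in> {a..b} \<Longrightarrow> norm (\<delta> x) \<le> D"
    using continuous_on_compact_bound[OF compact_Icc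
        continuous_on_subset[OF C1_differentiable_imp_continuous_on[OF C1] \<open>{a..b} \<subseteq> {0<..}\<close>]]
    by metis
  have fst_B: "fst ` B \<subseteq> {a..b}" by (auto simp: B_def)
  have "(L\<delta> * 1)-lipschitz_on B (\<lambda>p. \<delta> (fst p))"
    by (rule lipschitz_on_compose2[OF lipschitz_on_fst lipschitz_on_subset[OF L\<delta> fst_B]])
  then have "(D * 1 + c * (L\<delta> * 1))-lipschitz_on B (\<lambda>p. \<delta> (fst p) * snd p)"
    using D \<open>0 \<le> c\<close> by (intro lipschitz_on_mult lipschitz_on_snd) (auto simp: B_def)
  moreover have "(2 / a ^ 3 * 1)-lipschitz_on B (\<lambda>p. 1 / (fst p)\<^sup>2)"
    by (rule lipschitz_on_compose2[OF lipschitz_on_fst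
          lipschitz_on_subset[OF lipschitz_on_inverse_square[OF \<open>0 < a\<close>] fst_B]])
  ultimately have "(D * 1 + c * (L\<delta> * 1) + 2 / a ^ 3 * 1)-lipschitz_on B
      (\<lambda>p. - \<delta> (fst p) * snd p - 1 / (fst p)\<^sup>2)"
    by (simp add: lipschitz_on_diff)
  then have "(sqrt (1\<^sup>2 + (D * 1 + c * (L\<delta> * 1) + 2 / a ^ 3 * 1)\<^sup>2))-lipschitz_on B (kepler_field \<delta>)"
    unfolding kepler_field_def[abs_def] by (intro lipschitz_on_Pair lipschitz_on_snd)
  with that show ?thesis unfolding B_def .
qed

lemma kepler_backward_solution:
  assumes C1: "\<delta> C1_differentiable_on {0<..}" and "0 < r0"
  obtains \<eta> y where "0 < \<eta>" "y 0 = (r0, v0)"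
    "\<And>\<tau>. \<tau> \<in> {0..\<eta>} \<Longrightarrow> (y has_vector_derivative - kepler_field \<delta> (y \<tau>)) (at \<tau> within {0..\<eta>})"
    "\<And>\<tau>. r0 / 2 \<le> fst (y \<tau>)"
proof -
  define \<rho> where "\<rho> = r0 / 2"
  define B where "B = {r0 / 2..3 * r0 / 2} \<times> {-(\<bar>v0\<bar> + \<rho>)..\<bar>v0\<bar> + \<rho>}"
  have ball_B: "cball (r0, v0) \<rho> \<subseteq> B"
  proof
    fix p assume "p \<in> cball (r0, v0) \<rho>"
    then have "\<bar>fst p - r0\<bar> \<le> \<rho>" "\<bar>snd p - v0\<bar> \<le> \<rho>"
      using dist_fst_le[of p "(r0, v0)"] dist_snd_le[of p "(r0, v0)"]
      by (auto simp: dist_commute dist_real_def)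
    then show "p \<in> B"
      using abs_ge_self[of v0] abs_ge_minus_self[of v0]
      unfolding B_def mem_Times_iff atLeastAtMost_iff abs_le_iff \<rho>_def by linarith
  qed
  have "0 < r0 / 2" "0 \<le> \<bar>v0\<bar> + \<rho>" using \<open>0 < r0\<close> by (simp_all add: \<rho>_def)
  then obtain L where "L-lipschitz_on B (kepler_field \<delta>)"
    unfolding B_def by (rule kepler_field_lipschitz_on[OF C1])
  then have "L-lipschitz_on (cball (r0, v0) \<rho>) (\<lambda>p. - kepler_field \<delta> p)"
    using lipschitz_on_subset[OF _ ball_B] by simp
  then obtain \<eta> y where "0 < \<eta>" "y 0 = (r0, v0)"
    and y: "\<And>\<tau>. \<tau> \<in> {0..\<eta>} \<Longrightarrow> (y has_vector_derivative - kepler_field \<delta> (y \<tau>)) (at \<tau> within {0..\<eta>})"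
    and y_ball: "\<And>\<tau>. y \<tau> \<in> cball (r0, v0) \<rho>"
  proof (rule picard_local_existence)
    show "0 < \<rho>" using \<open>0 < r0\<close> by (simp add: \<rho>_def)
  qed (rule that)
  show ?thesis
  proof (rule that[OF \<open>0 < \<eta>\<close> \<open>y 0 = (r0, v0)\<close> y])
    show "r0 / 2 \<le> fst (y \<tau>)" for \<tau>
      using subsetD[OF ball_B y_ball] by (simp add: B_def mem_Times_iff)
  qed
qed

text \<open>The backward solution, run in reversed time \<open>t \<mapsto> y (a - t)\<close>, solves the equation
  to the left of \<open>a\<close>.\<close>

lemma kepler_solution_ending_at:
  assumes C1: "\<delta> C1_differentiable_on {0<..}" and "0 < r0"
  obtains \<eta> s where "0 < \<eta>" "is_sol \<delta> {a - \<eta><..<a} s"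
    "(s \<longlongrightarrow> r0) (at_left a)" "(deriv s \<longlongrightarrow> v0) (at_left a)"
proof -
  obtain \<eta> y where "0 < \<eta>" "y 0 = (r0, v0)"
    and y: "\<And>\<tau>. \<tau> \<in> {0..\<eta>} \<Longrightarrow> (y has_vector_derivative - kepler_field \<delta> (y \<tau>)) (at \<tau> within {0..\<eta>})"
    and y_pos: "\<And>\<tau>. r0 / 2 \<le> fst (y \<tau>)"
    by (rule kepler_backward_solution[OF C1 \<open>0 < r0\<close>]) (rule that)
  define z where "z t = y (a - t)" for t
  define J where "J = {a - \<eta><..<a}"
  have z_deriv: "(z has_vector_derivative kepler_field \<delta> (z t)) (at t)" if "t \<in> J" for t
  proof -
    have "a - t \<in> {0<..<\<eta>}" using that by (auto simp: J_def)
    then have "(y has_vector_derivative - kepler_field \<delta> (y (a - t))) (at (a - t))"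
      using y[of "a - t"] at_within_Icc_at[of 0 "a - t" \<eta>] by auto
    from has_vector_derivative_reflect[OF this] show ?thesis by (simp add: z_def[abs_def])
  qed
  have z_pos: "0 < fst (z t)" for t
    using y_pos[of "a - t"] \<open>0 < r0\<close> by (simp add: z_def)
  have "open J" by (simp add: J_def)
  note phase = is_sol_if_phase_curve[OF this z_deriv z_pos]
  have "continuous_on {a - \<eta>..a} z"
    unfolding z_def
    by (rule continuous_on_compose2[OF continuous_on_vector_derivative[OF y]])
       (auto intro!: continuous_intros)
  then have z_lim: "(z \<longlongrightarrow> (r0, v0)) (at_left a)"
    using continuous_on_Icc_at_leftD[of "a - \<eta>" a z] \<open>0 < \<eta>\<close> \<open>y 0 = (r0, v0)\<close> by (simp add: z_def)
  have in_J: "\<forall>\<^sub>F t in at_left a. t \<in> J"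
    unfolding J_def eventually_at_left_field using \<open>0 < \<eta>\<close> by (intro exI[of _ "a - \<eta>"]) auto
  show ?thesis
  proof (rule that[OF \<open>0 < \<eta>\<close> phase(1)[unfolded J_def]])
    show "((\<lambda>t. fst (z t)) \<longlongrightarrow> r0) (at_left a)"
      using tendsto_fst[OF z_lim] by simp
    show "(deriv (\<lambda>t. fst (z t)) \<longlongrightarrow> v0) (at_left a)"
      using tendsto_snd[OF z_lim] in_J by (auto elim!: Lim_transform_eventually eventually_mono simp: phase(2))
  qed
qed

section \<open>A solution near the left end of its interval\<close>

locale damped_kepler =
  fixes \<delta> r :: "real \<Rightarrow> real" and \<alpha> :: real and \<omega> :: ereal
  assumes \<delta>_nonneg: "\<forall>x>0. 0 \<le> \<delta> x"
    and \<delta>_bounded: "bounded (\<delta> ` {0<..})"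
    and \<delta>_C1: "\<delta> C1_differentiable_on {0<..}"
    and ivl_nonempty: "ereal \<alpha> < \<omega>"
    and sol: "is_sol \<delta> (ivl \<alpha> \<omega>) r"
begin

definition energy :: "real \<Rightarrow> real" where
  "energy t = 1/2 * (deriv r t)\<^sup>2 - 1 / r t"

lemma r_pos: "t \<in> ivl \<alpha> \<omega> \<Longrightarrow> 0 < r t"
  and r_deriv: "t \<in> ivl \<alpha> \<omega> \<Longrightarrow> (r has_real_derivative deriv r t) (at t)"
  and r_deriv2: "t \<in> ivl \<alpha> \<omega> \<Longrightarrow>
    (deriv r has_real_derivative - \<delta> (r t) * deriv r t - 1 / (r t)\<^sup>2) (at t)"
  using sol by (auto simp: is_sol_def)

lemma r_continuous_on: "S \<subseteq> ivl \<alpha> \<omega> \<Longrightarrow> continuous_on S r"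
  by (rule DERIV_continuous_on[OF has_field_derivative_at_within[OF r_deriv]]) blast

lemma deriv_r_continuous_on: "S \<subseteq> ivl \<alpha> \<omega> \<Longrightarrow> continuous_on S (deriv r)"
  by (rule DERIV_continuous_on[OF has_field_derivative_at_within[OF r_deriv2]]) blast

lemma \<delta>_le:
  obtains D where "0 \<le> D" "\<And>x. 0 < x \<Longrightarrow> \<delta> x \<le> D"
proof -
  obtain D where "\<And>x. 0 < x \<Longrightarrow> norm (\<delta> x) \<le> D"
    using \<delta>_bounded by (auto simp: bounded_iff)
  moreover have "0 \<le> D" using calculation[of 1] by simp
  ultimately show ?thesis by (intro that[of D]) (auto dest: abs_le_D1)
qed

lemma deriv_r_sq: "(deriv r t)\<^sup>2 = 2 * energy t + 2 / r t"
  by (simp add: energy_def)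

lemma energy_deriv:
  assumes "t \<in> ivl \<alpha> \<omega>"
  shows "(energy has_real_derivative - \<delta> (r t) * (deriv r t)\<^sup>2) (at t)"
proof -
  have "(energy has_real_derivative 1/2 * (2 * deriv r t * (- \<delta> (r t) * deriv r t - 1 / (r t)\<^sup>2))
      + deriv r t / (r t)\<^sup>2) (at t)"
    unfolding energy_def[abs_def] using r_pos[OF assms] r_deriv[OF assms] r_deriv2[OF assms]
    by (auto intro!: derivative_eq_intros simp: power2_eq_square)
  then show ?thesis by (simp add: algebra_simps power2_eq_square)
qed

lemma energy_antimono:
  assumes "t \<in> ivl \<alpha> \<omega>" "s \<in> ivl \<alpha> \<omega>" "t \<le> s"
  shows "energy s \<le> energy t"
proof (rule DERIV_nonpos_imp_nonincreasing[OF assms(3)])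
  fix x assume "t \<le> x" "x \<le> s"
  then have x: "x \<in> ivl \<alpha> \<omega>"
    using assms by (intro ivl_downward_closed[of _ x s]) (auto simp: ivl_def)
  show "\<exists>y. (energy has_real_derivative y) (at x) \<and> y \<le> 0"
    using energy_deriv[OF x] \<delta>_nonneg r_pos[OF x] by (intro exI conjI) auto
qed

text \<open>At a critical point \<open>t\<close> the energy is \<open>-1 / r t\<close>, and it is at least \<open>energy T\<close>.\<close>

lemma deriv_r_nonzero_if_small:
  assumes t: "t \<in> ivl \<alpha> \<omega>" and T: "T \<in> ivl \<alpha> \<omega>" "t \<le> T"
    and small: "r t < 1 / (\<bar>energy T\<bar> + 1)"
  shows "deriv r t \<noteq> 0"
proof
  assume "deriv r t = 0"
  then have "energy T \<le> - 1 / r t"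
    using energy_antimono[OF t T] by (simp add: energy_def)
  then have "1 / r t \<le> \<bar>energy T\<bar>" by linarith
  moreover have "\<bar>energy T\<bar> + 1 < 1 / r t"
    using small r_pos[OF t] by (simp add: field_simps add_pos_nonneg)
  ultimately show False by linarith
qed

lemma short_interval_near_alpha:
  assumes "\<forall>\<^sub>F t in at_right \<alpha>. P t"
  obtains D T where "0 \<le> D" "\<And>x. 0 < x \<Longrightarrow> \<delta> x \<le> D" "\<alpha> < T" "D * (T - \<alpha>) \<le> 1/4"
    "\<And>t. \<alpha> < t \<Longrightarrow> t \<le> T \<Longrightarrow> t \<in> ivl \<alpha> \<omega> \<and> P t"
proof -
  obtain D where D: "0 \<le> D" "\<And>x. 0 < x \<Longrightarrow> \<delta> x \<le> D" by (rule \<delta>_le) (rule that)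
  have "((\<lambda>t. D * (t - \<alpha>)) \<longlongrightarrow> D * (\<alpha> - \<alpha>)) (at_right \<alpha>)"
    by (intro tendsto_intros)
  then have "\<forall>\<^sub>F t in at_right \<alpha>. D * (t - \<alpha>) < 1/4"
    by (rule order_tendstoD) simp
  with assms eventually_at_right_in_ivl[OF ivl_nonempty]
  have "\<forall>\<^sub>F t in at_right \<alpha>. (t \<in> ivl \<alpha> \<omega> \<and> P t) \<and> D * (t - \<alpha>) < 1/4"
    by eventually_elim auto
  then obtain T where "\<alpha> < T"
    and near: "\<And>t. \<alpha> < t \<Longrightarrow> t \<le> T \<Longrightarrow> (t \<in> ivl \<alpha> \<omega> \<and> P t) \<and> D * (t - \<alpha>) < 1/4"
    by (rule eventually_at_right_imp_Ioc) (rule that)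
  moreover have "D * (T - \<alpha>) \<le> 1/4" using near[of T] \<open>\<alpha> < T\<close> by simp
  ultimately show ?thesis using D by (intro that[of D T]) auto
qed

text \<open>The weight \<open>g\<close> serves as an antiderivative of \<open>1 / r\<close>: since
  \<open>\<delta>(r) r'\<^sup>2 \<le> D (2 energy + 2/r) \<le> 2 D P + 2 D g'\<close>, the weighted energy is nondecreasing.\<close>

lemma energy_weighted_mono:
  assumes T: "T \<in> ivl \<alpha> \<omega>" and D: "\<And>x. 0 < x \<Longrightarrow> \<delta> x \<le> D" "0 \<le> D"
    and g: "\<And>s. \<alpha> < s \<Longrightarrow> s \<le> T \<Longrightarrow> (g has_real_derivative g' s) (at s)"
    and g': "\<And>s. \<alpha> < s \<Longrightarrow> s \<le> T \<Longrightarrow> 1 / r s \<le> g' s"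
    and t: "\<alpha> < t" "t \<le> T" and P: "energy t \<le> P"
  shows "energy t + 2 * D * P * t + 2 * D * g t \<le> energy T + 2 * D * P * T + 2 * D * g T"
proof (rule DERIV_nonneg_imp_nondecreasing[OF t(2)])
  fix s assume "t \<le> s" "s \<le> T"
  then have s: "\<alpha> < s" "s \<le> T" and "t \<le> s" using t by auto
  have I: "x \<in> ivl \<alpha> \<omega>" if "\<alpha> < x" "x \<le> T" for x
    using ivl_downward_closed[OF that T] .
  have "((\<lambda>s. energy s + 2 * D * P * s + 2 * D * g s) has_real_derivative
      - \<delta> (r s) * (deriv r s)\<^sup>2 + 2 * D * P + 2 * D * g' s) (at s)"
    by (auto intro!: derivative_eq_intros energy_deriv[OF I[OF s]] g[OF s])
  moreover have "\<delta> (r s) * (deriv r s)\<^sup>2 \<le> 2 * D * P + 2 * D * g' s"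
  proof -
    have "\<delta> (r s) * (deriv r s)\<^sup>2 \<le> D * (deriv r s)\<^sup>2"
      using D(1)[OF r_pos[OF I[OF s]]] by (intro mult_right_mono) auto
    also have "\<dots> = D * (2 * energy s + 2 / r s)" by (simp add: deriv_r_sq)
    also have "\<dots> \<le> D * (2 * P + 2 * g' s)"
      using energy_antimono[OF I[OF t] I[OF s] \<open>t \<le> s\<close>] g'[OF s] P D(2)
      by (intro mult_left_mono) auto
    finally show ?thesis by (simp add: algebra_simps)
  qed
  ultimately show "\<exists>y. ((\<lambda>s. energy s + 2 * D * P * s + 2 * D * g s) has_real_derivative y) (at s)
      \<and> 0 \<le> y"
    by force
qed

lemma energy_le_near_alpha:
  assumes T: "T \<in> ivl \<alpha> \<omega>" and D: "\<And>x. 0 < x \<Longrightarrow> \<delta> x \<le> D" "0 \<le> D" "D * (T - \<alpha>) \<le> 1/4"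
    and g: "\<And>s. \<alpha> < s \<Longrightarrow> s \<le> T \<Longrightarrow> (g has_real_derivative g' s) (at s)"
    and g': "\<And>s. \<alpha> < s \<Longrightarrow> s \<le> T \<Longrightarrow> 1 / r s \<le> g' s"
    and t: "\<alpha> < t" "t \<le> T"
  shows "energy t \<le> 2 * \<bar>energy T\<bar> + 4 * D * (g T - g t)"
proof -
  have "g t \<le> g T"
  proof (rule DERIV_nonneg_imp_nondecreasing[OF t(2)])
    fix s assume "t \<le> s" "s \<le> T"
    then have s: "\<alpha> < s" "s \<le> T" using t by auto
    have "0 < 1 / r s" using r_pos[OF ivl_downward_closed[OF s T]] by simp
    then have "0 \<le> g' s" using g'[OF s] by linarith
    with g[OF s] show "\<exists>y. (g has_real_derivative y) (at s) \<and> 0 \<le> y" by blast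
  qed
  then have "0 \<le> D * (g T - g t)" using D(2) by simp
  define P where "P = max 0 (energy t)"
  have bound: "energy t \<le> energy T + P * (2 * D * (T - t)) + 2 * D * (g T - g t)"
    using energy_weighted_mono[OF T D(1,2) g g' t, of P] by (simp add: P_def algebra_simps)
  have small: "P * (2 * D * (T - t)) \<le> P * (1/2)"
  proof (rule mult_left_mono)
    have "D * (T - t) \<le> D * (T - \<alpha>)" using D(2) t by (intro mult_left_mono) auto
    then show "2 * D * (T - t) \<le> 1/2" using D(3) by simp
  qed (simp add: P_def)
  show ?thesis
  proof (cases "0 \<le> energy t")
    case True
    then have "P = energy t" by (simp add: P_def)
    then show ?thesis using bound small \<open>0 \<le> D * (g T - g t)\<close> by linarith
  next
    case False
    then show ?thesis using \<open>0 \<le> D * (g T - g t)\<close> abs_ge_zero[of "energy T"] by linarith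
  qed
qed

lemma energy_bounded_if_bounded_below:
  assumes "0 < e" and "\<forall>\<^sub>F t in at_right \<alpha>. e \<le> r t"
  obtains D T H where "0 \<le> D" "\<And>x. 0 < x \<Longrightarrow> \<delta> x \<le> D" "\<alpha> < T"
    "\<And>t. \<alpha> < t \<Longrightarrow> t \<le> T \<Longrightarrow> t \<in> ivl \<alpha> \<omega> \<and> e \<le> r t \<and> energy t \<le> H"
proof -
  obtain D T where D: "0 \<le> D" "\<And>x. 0 < x \<Longrightarrow> \<delta> x \<le> D" "D * (T - \<alpha>) \<le> 1/4"
    and "\<alpha> < T" and near: "\<And>t. \<alpha> < t \<Longrightarrow> t \<le> T \<Longrightarrow> t \<in> ivl \<alpha> \<omega> \<and> e \<le> r t"
    by (rule short_interval_near_alpha[OF assms(2)]) (rule that)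
  have "energy t \<le> 2 * \<bar>energy T\<bar> + 1 / e" if t: "\<alpha> < t" "t \<le> T" for t
  proof -
    have "energy t \<le> 2 * \<bar>energy T\<bar> + 4 * D * (T / e - t / e)"
    proof (rule energy_le_near_alpha[where g' = "\<lambda>_. 1 / e"])
      show "1 / r s \<le> 1 / e" if "\<alpha> < s" "s \<le> T" for s
        using near[OF that] \<open>0 < e\<close> by (intro divide_left_mono) auto
    qed (use near[of T] \<open>\<alpha> < T\<close> t D \<open>0 < e\<close> in \<open>auto intro!: derivative_eq_intros\<close>)
    also have "4 * D * (T / e - t / e) = 4 * (D * (T - t)) / e"
      using \<open>0 < e\<close> by (simp add: field_simps)
    also have "\<dots> \<le> 4 * (1/4) / e"
    proof -
      have "D * (T - t) \<le> D * (T - \<alpha>)" using D t by (intro mult_left_mono) auto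
      then show ?thesis using D(3) \<open>0 < e\<close> by (intro divide_right_mono mult_left_mono) auto
    qed
    finally show ?thesis by simp
  qed
  with D(1,2) \<open>\<alpha> < T\<close> near show ?thesis by (intro that) auto
qed

text \<open>A bounded energy bounds \<open>r'\<close>, and then the equation bounds \<open>r''\<close>.\<close>

lemma limits_at_alpha_if_bounded_below:
  assumes "0 < e" and ge: "\<forall>\<^sub>F t in at_right \<alpha>. e \<le> r t"
  obtains r0 v0 where "(r \<longlongrightarrow> r0) (at_right \<alpha>)" "(deriv r \<longlongrightarrow> v0) (at_right \<alpha>)" "e \<le> r0"
proof -
  obtain D T H where D: "0 \<le> D" "\<And>x. 0 < x \<Longrightarrow> \<delta> x \<le> D" and T: "\<alpha> < T"
    and near: "\<And>t. \<alpha> < t \<Longrightarrow> t \<le> T \<Longrightarrow> t \<in> ivl \<alpha> \<omega> \<and> e \<le> r t \<and> energy t \<le> H"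
    by (rule energy_bounded_if_bounded_below[OF assms]) (rule that)
  define V where "V = sqrt (2 * H + 2 / e)"
  have v_bound: "\<bar>deriv r t\<bar> \<le> V" if t: "\<alpha> < t" "t \<le> T" for t
  proof -
    have "1 / r t \<le> 1 / e" using near[OF t] \<open>0 < e\<close> by (intro divide_left_mono) auto
    then have "(deriv r t)\<^sup>2 \<le> 2 * H + 2 / e"
      using near[OF t] by (simp add: deriv_r_sq)
    then show ?thesis unfolding V_def by (metis real_sqrt_abs real_sqrt_le_mono)
  qed
  have a_bound: "\<bar>- \<delta> (r t) * deriv r t - 1 / (r t)\<^sup>2\<bar> \<le> D * V + 1 / e\<^sup>2"
    if t: "\<alpha> < t" "t \<le> T" for t
  proof -
    have "\<bar>\<delta> (r t) * deriv r t\<bar> \<le> D * V"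
      unfolding abs_mult using near[OF t] D \<delta>_nonneg r_pos v_bound[OF t]
      by (intro mult_mono) auto
    moreover have "1 / (r t)\<^sup>2 \<le> 1 / e\<^sup>2"
      using near[OF t] \<open>0 < e\<close> by (intro divide_left_mono power_mono) auto
    moreover have "0 \<le> 1 / (r t)\<^sup>2" by simp
    ultimately show ?thesis unfolding abs_le_iff by linarith
  qed
  obtain r0 where r0: "(r \<longlongrightarrow> r0) (at_right \<alpha>)"
    by (rule tendsto_at_right_if_deriv_bounded[OF T, where f' = "deriv r" and B = V])
       (use near r_deriv v_bound in auto)
  obtain v0 where "(deriv r \<longlongrightarrow> v0) (at_right \<alpha>)"
    by (rule tendsto_at_right_if_deriv_bounded[OF T,
          where f' = "\<lambda>t. - \<delta> (r t) * deriv r t - 1 / (r t)\<^sup>2" and B = "D * V + 1 / e\<^sup>2"])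
       (use near r_deriv2 a_bound in auto)
  moreover have "e \<le> r0"
    using tendsto_lowerbound[OF r0 ge] by simp
  ultimately show ?thesis using r0 that by blast
qed

lemma not_max_left_if_limits:
  assumes r_lim: "(r \<longlongrightarrow> r0) (at_right \<alpha>)" and v_lim: "(deriv r \<longlongrightarrow> v0) (at_right \<alpha>)"
    and "0 < r0"
  shows "\<not> max_left \<delta> \<alpha> \<omega> r"
proof -
  obtain \<eta> s where "0 < \<eta>" "is_sol \<delta> {\<alpha> - \<eta><..<\<alpha>} s"
    and s_left: "(s \<longlongrightarrow> r0) (at_left \<alpha>)" and v_left: "(deriv s \<longlongrightarrow> v0) (at_left \<alpha>)"
    by (rule kepler_solution_ending_at[OF \<delta>_C1 \<open>0 < r0\<close>]) (rule that)
  define s' where "s' t = (if t < \<alpha> then s t else if t = \<alpha> then r0 else r t)" for t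
  have left: "is_sol \<delta> {\<alpha> - \<eta><..<\<alpha>} s'"
    by (rule is_sol_cong[OF \<open>is_sol \<delta> {\<alpha> - \<eta><..<\<alpha>} s\<close>]) (auto simp: s'_def)
  have right: "is_sol \<delta> (ivl \<alpha> \<omega>) s'"
    by (rule is_sol_cong[OF sol open_ivl]) (auto simp: ivl_def s'_def)
  have in_left: "\<forall>\<^sub>F t in at_left \<alpha>. t \<in> {\<alpha> - \<eta><..<\<alpha>}"
    unfolding eventually_at_left_field using \<open>0 < \<eta>\<close> by (intro exI[of _ "\<alpha> - \<eta>"]) auto
  have in_right: "\<forall>\<^sub>F t in at_right \<alpha>. t \<in> ivl \<alpha> \<omega>"
    by (rule eventually_at_right_in_ivl[OF ivl_nonempty])
  have "deriv s' t = deriv s t" if "t \<in> {\<alpha> - \<eta><..<\<alpha>}" for t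
    by (rule deriv_eq_on_open[OF _ _ that]) (auto simp: s'_def)
  moreover have "deriv s' t = deriv r t" if "t \<in> ivl \<alpha> \<omega>" for t
    by (rule deriv_eq_on_open[OF open_ivl _ that]) (auto simp: ivl_def s'_def)
  ultimately have "(s' \<longlongrightarrow> r0) (at \<alpha>)" "(deriv s' \<longlongrightarrow> v0) (at \<alpha>)"
    using s_left v_left r_lim v_lim in_left in_right unfolding filterlim_at_split
    by (auto elim!: Lim_transform_eventually eventually_mono simp: ivl_def s'_def)
  moreover have "isCont \<delta> r0"
    using C1_differentiable_imp_continuous_on[OF \<delta>_C1] \<open>0 < r0\<close>
    by (simp add: continuous_on_eq_continuous_at)
  moreover have "s' \<alpha> = r0" by (simp add: s'_def)
  ultimately have "is_sol \<delta> (ivl (\<alpha> - \<eta>) \<omega>) s'"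
    using is_sol_glue[OF left right] \<open>0 < \<eta>\<close> ivl_nonempty \<open>0 < r0\<close> by simp
  moreover have "\<forall>t\<in>ivl \<alpha> \<omega>. s' t = r t" by (simp add: s'_def ivl_def)
  ultimately show ?thesis using \<open>0 < \<eta>\<close> unfolding max_left_def by force
qed

text \<open>Between two points where \<open>r \<ge> e\<close> lies a point where \<open>r\<close> is tiny, so the minimum of \<open>r\<close> over
  that range is a critical point at which \<open>r\<close> is small.\<close>

lemma tendsto_0_if_frequently_small:
  assumes small: "\<And>b m. \<alpha> < b \<Longrightarrow> 0 < m \<Longrightarrow> \<exists>t. \<alpha> < t \<and> t < b \<and> r t < m"
  shows "(r \<longlongrightarrow> 0) (at_right \<alpha>)"
proof (rule ccontr)
  assume not_0: "\<not> (r \<longlongrightarrow> 0) (at_right \<alpha>)"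
  obtain T where T: "\<alpha> < T" "T \<in> ivl \<alpha> \<omega>"
    using eventually_at_right_in_ivl[OF ivl_nonempty] eventually_at_right_imp_Ioc by blast
  have I: "t \<in> ivl \<alpha> \<omega>" if "\<alpha> < t" "t \<le> T" for t
    using ivl_downward_closed[OF that T(2)] .
  from not_0 obtain e where "0 < e" and not_ev: "\<not> (\<forall>\<^sub>F t in at_right \<alpha>. dist (r t) 0 < e)"
    by (auto simp: tendsto_iff)
  have large: "\<exists>t. \<alpha> < t \<and> t < b \<and> e \<le> r t" if "\<alpha> < b" for b
  proof -
    have "\<alpha> < min b T" using that T(1) by simp
    with not_ev have "\<exists>t>\<alpha>. t < min b T \<and> \<not> dist (r t) 0 < e"
      unfolding eventually_at_right_field by blast
    then obtain t where t: "\<alpha> < t" "t < min b T" "\<not> dist (r t) 0 < e" by blast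
    then show ?thesis using r_pos[OF I[of t]] by (auto simp: dist_real_def)
  qed
  define m where "m = min e (1 / (\<bar>energy T\<bar> + 1))"
  have "0 < m" using \<open>0 < e\<close> by (simp add: m_def add_pos_nonneg)
  obtain s1 where s1: "\<alpha> < s1" "s1 < T" "e \<le> r s1" using large[OF T(1)] by blast
  obtain t where t: "\<alpha> < t" "t < s1" "r t < m" using small[OF s1(1) \<open>0 < m\<close>] by blast
  obtain s2 where s2: "\<alpha> < s2" "s2 < t" "e \<le> r s2" using large[OF t(1)] by blast
  have "continuous_on {s2..s1} r"
    using I s1 s2 by (intro r_continuous_on) auto
  then obtain p where p: "s2 \<le> p" "p \<le> s1" and p_min: "\<And>x. s2 \<le> x \<Longrightarrow> x \<le> s1 \<Longrightarrow> r p \<le> r x"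
    using continuous_attains_inf[of "{s2..s1}" r] s2 t by fastforce
  have "r p < m" using p_min[of t] s2 t by linarith
  then have "s2 < p" "p < s1" using p s1 s2 by (auto simp: m_def le_less)
  then have "deriv r p = 0"
    by (intro DERIV_local_min[OF r_deriv[OF I], of p "min (p - s2) (s1 - p)"])
       (use p_min s2 s1 in auto)
  moreover have "deriv r p \<noteq> 0"
    by (rule deriv_r_nonzero_if_small[OF I T(2)]) (use \<open>r p < m\<close> p s1 s2 in \<open>auto simp: m_def\<close>)
  ultimately show False by contradiction
qed

lemma r_tendsto_0:
  assumes "max_left \<delta> \<alpha> \<omega> r"
  shows "(r \<longlongrightarrow> 0) (at_right \<alpha>)"
proof (rule tendsto_0_if_frequently_small)
  fix b m :: real assume "\<alpha> < b" "0 < m"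
  show "\<exists>t. \<alpha> < t \<and> t < b \<and> r t < m"
  proof (rule ccontr)
    assume "\<not> ?thesis"
    then have "m \<le> r t" if "\<alpha> < t" "t < b" for t using that by (meson not_less)
    then have "\<forall>\<^sub>F t in at_right \<alpha>. m \<le> r t"
      using \<open>\<alpha> < b\<close> unfolding eventually_at_right_field by blast
    then obtain r0 v0 where "(r \<longlongrightarrow> r0) (at_right \<alpha>)" "(deriv r \<longlongrightarrow> v0) (at_right \<alpha>)" "m \<le> r0"
      using limits_at_alpha_if_bounded_below[OF \<open>0 < m\<close>] by metis
    with not_max_left_if_limits assms \<open>0 < m\<close> show False by force
  qed
qed

lemma deriv_r_pos_near_alpha:
  assumes r0: "(r \<longlongrightarrow> 0) (at_right \<alpha>)"
  shows "\<forall>\<^sub>F t in at_right \<alpha>. t \<in> ivl \<alpha> \<omega> \<and> 0 < deriv r t"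
proof -
  obtain T0 where T0: "\<alpha> < T0" "T0 \<in> ivl \<alpha> \<omega>"
    using eventually_at_right_in_ivl[OF ivl_nonempty] eventually_at_right_imp_Ioc by blast
  have "\<forall>\<^sub>F t in at_right \<alpha>. r t < 1 / (\<bar>energy T0\<bar> + 1)"
    by (rule order_tendstoD(2)[OF r0]) (simp add: add_pos_nonneg)
  moreover have "\<forall>\<^sub>F t in at_right \<alpha>. t < T0"
    using T0(1) by (auto simp: eventually_at_right_field)
  ultimately obtain T where "\<alpha> < T"
    and near: "\<And>t. \<alpha> < t \<Longrightarrow> t \<le> T \<Longrightarrow> r t < 1 / (\<bar>energy T0\<bar> + 1) \<and> t < T0"
    by (rule eventually_at_right_imp_Ioc[OF eventually_conj]) (rule that)
  have I: "t \<in> ivl \<alpha> \<omega>" if "t \<in> {\<alpha><..T}" for t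
    using ivl_downward_closed[of \<alpha> t T0] near[of t] that T0(2) by auto
  have "0 < deriv r t" if "t \<in> {\<alpha><..T}" for t
  proof (rule deriv_pos_if_tendsto_0_at_right[OF _ _ _ _ r0 that])
    show "continuous_on {\<alpha><..T} (deriv r)" using I by (intro deriv_r_continuous_on) auto
    fix x assume x: "x \<in> {\<alpha><..T}"
    show "(r has_real_derivative deriv r x) (at x)" "0 < r x" using I[OF x] by (auto intro: r_deriv r_pos)
    show "deriv r x \<noteq> 0"
      using deriv_r_nonzero_if_small[OF I[OF x] T0(2)] near[of x] x by auto
  qed
  with I \<open>\<alpha> < T\<close> show ?thesis
    unfolding eventually_at_right_field by (intro exI[of _ T]) auto
qed

lemma deriv_r_large_near_alpha:
  assumes r0: "(r \<longlongrightarrow> 0) (at_right \<alpha>)"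
  shows "\<forall>\<^sub>F t in at_right \<alpha>. 0 < deriv r t \<and> 1 / sqrt (r t) \<le> deriv r t"
proof -
  obtain T0 where T0: "\<alpha> < T0" "T0 \<in> ivl \<alpha> \<omega>"
    using eventually_at_right_in_ivl[OF ivl_nonempty] eventually_at_right_imp_Ioc by blast
  define K where "K = \<bar>energy T0\<bar>"
  have "\<forall>\<^sub>F t in at_right \<alpha>. r t < 1 / (2 * K + 1)"
    by (rule order_tendstoD(2)[OF r0]) (simp add: K_def add_nonneg_pos)
  moreover have "\<forall>\<^sub>F t in at_right \<alpha>. t < T0"
    using T0(1) by (auto simp: eventually_at_right_field)
  ultimately show ?thesis
    using deriv_r_pos_near_alpha[OF r0]
  proof eventually_elim
    case (elim t)
    then have "0 < r t" by (simp add: r_pos)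
    have "- K \<le> energy t"
      using energy_antimono[of t T0] elim T0(2) by (simp add: K_def)
    moreover have "2 * K + 1 < 1 / r t"
      using elim \<open>0 < r t\<close> by (simp add: K_def field_simps add_pos_nonneg)
    ultimately have "1 / r t \<le> (deriv r t)\<^sup>2" by (simp add: deriv_r_sq)
    then have "sqrt (1 / r t) \<le> \<bar>deriv r t\<bar>" by (metis real_sqrt_abs real_sqrt_le_mono)
    then show ?case using elim by (simp add: real_sqrt_divide)
  qed
qed

text \<open>The weight is now \<open>g = 2 \<surd>r\<close>, whose derivative \<open>r' / \<surd>r\<close> dominates \<open>1 / r\<close>.\<close>

lemma energy_converges_at_alpha:
  assumes r0: "(r \<longlongrightarrow> 0) (at_right \<alpha>)"
  shows "\<exists>L. (energy \<longlongrightarrow> L) (at_right \<alpha>)"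
proof -
  obtain D T where D: "0 \<le> D" "\<And>x. 0 < x \<Longrightarrow> \<delta> x \<le> D" "D * (T - \<alpha>) \<le> 1/4"
    and "\<alpha> < T" and near: "\<And>t. \<alpha> < t \<Longrightarrow> t \<le> T \<Longrightarrow>
      t \<in> ivl \<alpha> \<omega> \<and> 0 < deriv r t \<and> 1 / sqrt (r t) \<le> deriv r t"
    by (rule short_interval_near_alpha[OF deriv_r_large_near_alpha[OF r0]]) (rule that)
  have "energy t \<le> 2 * \<bar>energy T\<bar> + 8 * D * sqrt (r T)" if t: "\<alpha> < t" "t \<le> T" for t
  proof -
    have "energy t \<le> 2 * \<bar>energy T\<bar> + 4 * D * (2 * sqrt (r T) - 2 * sqrt (r t))"
    proof (rule energy_le_near_alpha[where g' = "\<lambda>s. deriv r s / sqrt (r s)"])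
      fix s assume s: "\<alpha> < s" "s \<le> T"
      have r_s: "0 < r s" using r_pos near[OF s] by blast
      show "((\<lambda>s. 2 * sqrt (r s)) has_real_derivative deriv r s / sqrt (r s)) (at s)"
        using near[OF s] r_s by (auto intro!: derivative_eq_intros r_deriv simp: field_simps)
      have "1 / sqrt (r s) * (1 / sqrt (r s)) \<le> deriv r s * (1 / sqrt (r s))"
        using near[OF s] r_s by (intro mult_right_mono) auto
      then show "1 / r s \<le> deriv r s / sqrt (r s)"
        using r_s by (simp add: real_sqrt_mult[symmetric])
    qed (use near[of T] \<open>\<alpha> < T\<close> t D in auto)
    also have "\<dots> \<le> 2 * \<bar>energy T\<bar> + 8 * D * sqrt (r T)"
      using D(1) r_pos[of t] near[OF t] by (simp add: algebra_simps)
    finally show ?thesis .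
  qed
  moreover have "energy y \<le> energy x" if "\<alpha> < x" "x \<le> y" "y < T" for x y
    using that near[of x] near[of y] by (intro energy_antimono) auto
  ultimately show ?thesis
    using antimono_tendsto_at_right[OF \<open>\<alpha> < T\<close>, of energy] by (metis less_imp_le)
qed

lemma sqrt_r_mult_deriv_r_tendsto:
  assumes r0: "(r \<longlongrightarrow> 0) (at_right \<alpha>)"
  shows "((\<lambda>t. sqrt (r t) * deriv r t) \<longlongrightarrow> sqrt 2) (at_right \<alpha>)"
proof -
  obtain L where L: "(energy \<longlongrightarrow> L) (at_right \<alpha>)"
    using energy_converges_at_alpha[OF r0] by blast
  have near: "\<forall>\<^sub>F t in at_right \<alpha>. t \<in> ivl \<alpha> \<omega> \<and> 0 < deriv r t"
    by (rule deriv_r_pos_near_alpha[OF r0])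
  have "((\<lambda>t. 2 * energy t * r t + 2) \<longlongrightarrow> 2 * L * 0 + 2) (at_right \<alpha>)"
    by (intro tendsto_intros L r0)
  moreover have "\<forall>\<^sub>F t in at_right \<alpha>. 2 * energy t * r t + 2 = (sqrt (r t) * deriv r t)\<^sup>2"
    using near
  proof eventually_elim
    case (elim t)
    then have "0 < r t" by (simp add: r_pos)
    then show ?case by (simp add: power_mult_distrib deriv_r_sq field_simps)
  qed
  ultimately have "((\<lambda>t. (sqrt (r t) * deriv r t)\<^sup>2) \<longlongrightarrow> 2) (at_right \<alpha>)"
    by (simp add: tendsto_cong)
  then have "((\<lambda>t. sqrt ((sqrt (r t) * deriv r t)\<^sup>2)) \<longlongrightarrow> sqrt 2) (at_right \<alpha>)"
    by (rule tendsto_real_sqrt)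
  moreover have "\<forall>\<^sub>F t in at_right \<alpha>. sqrt ((sqrt (r t) * deriv r t)\<^sup>2) = sqrt (r t) * deriv r t"
    using near
  proof eventually_elim
    case (elim t)
    then have "0 \<le> sqrt (r t) * deriv r t" using r_pos[of t] by simp
    then show ?case by simp
  qed
  ultimately show ?thesis by (simp add: tendsto_cong)
qed

text \<open>L'Hospital's rule for \<open>r\<^sup>3\<^sup>/\<^sup>2 / (t - \<alpha>)\<close>, whose derivative ratio is \<open>3/2 \<surd>r r'\<close>.\<close>

lemma r_three_halves_tendsto:
  assumes r0: "(r \<longlongrightarrow> 0) (at_right \<alpha>)"
  shows "((\<lambda>t. r t * sqrt (r t) / (t - \<alpha>)) \<longlongrightarrow> 3/2 * sqrt 2) (at_right \<alpha>)"
proof (rule lhopital_right[where f' = "\<lambda>t. 3/2 * (sqrt (r t) * deriv r t)" and g' = "\<lambda>_. 1"])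
  show "((\<lambda>t. r t * sqrt (r t)) \<longlongrightarrow> 0) (at_right \<alpha>)"
    using tendsto_mult[OF r0 tendsto_real_sqrt[OF r0]] by simp
  show "((\<lambda>t. t - \<alpha>) \<longlongrightarrow> 0) (at_right \<alpha>)"
    by (intro tendsto_eq_intros) auto
  show "\<forall>\<^sub>F t in at_right \<alpha>. t - \<alpha> \<noteq> 0"
    by (simp add: eventually_at_filter)
  show "\<forall>\<^sub>F t in at_right \<alpha>. ((\<lambda>t. t - \<alpha>) has_real_derivative 1) (at t)"
    by (intro always_eventually allI) (auto intro!: derivative_eq_intros)
  show "\<forall>\<^sub>F t in at_right \<alpha>.
      ((\<lambda>t. r t * sqrt (r t)) has_real_derivative 3/2 * (sqrt (r t) * deriv r t)) (at t)"
    using eventually_at_right_in_ivl[OF ivl_nonempty]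
  proof eventually_elim
    case (elim t)
    then have "0 < r t" by (simp add: r_pos)
    then show ?case using elim
      by (auto intro!: derivative_eq_intros r_deriv simp: field_simps real_sqrt_mult[symmetric])
  qed
  show "((\<lambda>t. 3/2 * (sqrt (r t) * deriv r t) / 1) \<longlongrightarrow> 3/2 * sqrt 2) (at_right \<alpha>)"
    using tendsto_mult_left[OF sqrt_r_mult_deriv_r_tendsto[OF r0], of "3/2"] by simp
qed simp

lemma r_asymptotics_at_alpha:
  assumes r0: "(r \<longlongrightarrow> 0) (at_right \<alpha>)"
  shows "((\<lambda>t. r t / (t - \<alpha>) powr (2/3)) \<longlongrightarrow> root 3 (9/2)) (at_right \<alpha>)"
proof -
  have "((\<lambda>t. (r t * sqrt (r t) / (t - \<alpha>)) powr (2/3)) \<longlongrightarrow> (3/2 * sqrt 2) powr (2/3))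
      (at_right \<alpha>)"
    by (rule tendsto_powr[OF r_three_halves_tendsto[OF r0]]) auto
  moreover have "(3/2 * sqrt 2 :: real) powr (2/3) = root 3 (9/2)"
  proof -
    have "(3/2 * sqrt 2 :: real) powr (2/3) = ((3/2 * sqrt 2) powr 2) powr (1/3)"
      by (subst powr_powr) simp
    also have "(3/2 * sqrt 2 :: real) powr 2 = 9/2"
      using powr_realpow[of "3/2 * sqrt 2" 2] by (simp add: power_mult_distrib power_divide)
    finally show ?thesis by (simp add: root_powr_inverse)
  qed
  moreover have "\<forall>\<^sub>F t in at_right \<alpha>. (r t * sqrt (r t) / (t - \<alpha>)) powr (2/3) = r t / (t - \<alpha>) powr (2/3)"
    using eventually_at_right_in_ivl[OF ivl_nonempty] eventually_at_right_less[of \<alpha>]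
  proof eventually_elim
    case (elim t)
    then have "0 < r t" by (simp add: r_pos)
    have "r t powr (3/2) = r t powr (1 + 1/2)" by simp
    also have "\<dots> = r t powr 1 * r t powr (1/2)" by (rule powr_add)
    also have "\<dots> = r t * sqrt (r t)" using \<open>0 < r t\<close> by (simp add: powr_half_sqrt)
    finally have "r t * sqrt (r t) = r t powr (3/2)" by simp
    then show ?case using \<open>0 < r t\<close> elim by (simp add: powr_divide powr_powr)
  qed
  ultimately show ?thesis by (simp add: tendsto_cong)
qed

end

theorem lemma8p1:
  fixes \<delta> :: "real \<Rightarrow> real" and r :: "real \<Rightarrow> real" and \<alpha> :: real and \<omega> :: ereal
  assumes nonneg: "\<forall>x>0. 0 \<le> \<delta> x"
    and bdd: "bounded (\<delta> ` {0<..})"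
    and C1: "\<delta> C1_differentiable_on {0<..}"
    and ivl_ne: "ereal \<alpha> < \<omega>"
    and sol: "is_sol \<delta> (ivl \<alpha> \<omega>) r"
    and maxl: "max_left \<delta> \<alpha> \<omega> r"
    and maxr: "max_right \<delta> \<alpha> \<omega> r"
  defines "h \<equiv> (\<lambda>t. (1/2) * (deriv r t)\<^sup>2 - 1 / r t)"
  shows "(r \<longlongrightarrow> 0) (at_right \<alpha>) \<and>
         (\<exists>L::real. (h \<longlongrightarrow> L) (at_right \<alpha>)) \<and>
         ((\<lambda>t. r t / (t - \<alpha>) powr (2/3)) \<longlongrightarrow> root 3 (9/2)) (at_right \<alpha>)"
proof -
  interpret damped_kepler \<delta> r \<alpha> \<omega>
    using nonneg bdd C1 ivl_ne sol by unfold_locales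
  have "h = energy" by (simp add: h_def energy_def fun_eq_iff)
  have r0: "(r \<longlongrightarrow> 0) (at_right \<alpha>)" by (rule r_tendsto_0[OF maxl])
  show ?thesis
    using r0 energy_converges_at_alpha[OF r0] r_asymptotics_at_alpha[OF r0] \<open>h = energy\<close> by simp
qed

end
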